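(* Let $T$ be an ergodic probability preserving transformation of a standard probability space $(X,\mathcal B,m)$, let $G=\mathbb R$ or $G=\mathbb T$, and let $\varphi:X\to G$ be measurable with $T_\varphi(x,y)=(Tx,y+\varphi(x))$ ergodic. If $\mathcal E_\varphi\ne\{\mathrm{Id}\}$, then $\varphi$ is aperiodic.
   Context: $\mathcal E_\varphi$ is the set of surjective continuous group endomorphisms $w$ of $G$ for which there exist a non-singular transformation $S$ of $X$ commuting with $T$ and a measurable $f:X\to G$ such that $(x,y)\mapsto(Sx,f(x)+w(y))$ is a non-singular transformation commuting with $T_\varphi$. The function $\varphi$ is aperiodic if every eigenfunction of $T_\varphi$ depends only on $x$: whenever $f:X\times G\to\mathbb T$ is measurable with $f\circ T_\varphi=\lambda f$ for some $\lambda\in\mathbb T$, there is measurable $g:X\to\mathbb T$ with $f(x,y)=g(x)$ a.e. (so every eigenvalue of $T_\varphi$ is an eigenvalue of $T$). *)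

theory Defs
  imports "HOL-Probability.Probability"
begin

definition ergodic :: "'a measure \<Rightarrow> ('a \<Rightarrow> 'a) \<Rightarrow> bool" where
  "ergodic N R \<longleftrightarrow> (\<forall>A\<in>sets N. R -` A \<inter> space N = A \<longrightarrow>
      emeasure N A = 0 \<or> emeasure N (space N - A) = 0)"

definition nonsingular :: "'a measure \<Rightarrow> ('a \<Rightarrow> 'a) \<Rightarrow> bool" where
  "nonsingular N S \<longleftrightarrow> S \<in> N \<rightarrow>\<^sub>M N \<and>
      (\<forall>A\<in>sets N. emeasure N (S -` A \<inter> space N) = 0 \<longleftrightarrow> emeasure N A = 0)"

definition skew :: "('a \<Rightarrow> 'a) \<Rightarrow> ('g \<Rightarrow> 'g \<Rightarrow> 'g) \<Rightarrow> ('a \<Rightarrow> 'g) \<Rightarrow> 'a \<times> 'g \<Rightarrow> 'a \<times> 'g" where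
  "skew T add \<phi> = (\<lambda>(x, y). (T x, add y (\<phi> x)))"

text \<open>The circle group T, realised as the unit circle in the complex plane (group operation *),
  with (normalised) Haar measure: the image of Lebesgue measure on [0,1) under t \<mapsto> exp(2 pi i t).\<close>
definition circle :: "complex set" where
  "circle = sphere 0 1"

definition circle_measure :: "complex measure" where
  "circle_measure = distr (restrict_space lborel {0..<1}) (restrict_space borel circle)
      (\<lambda>t::real. cis (2 * pi * t))"

text \<open>The set E_phi, for a group G with carrier Gc, operation add and Haar measure H.
  Endomorphisms are taken extensional (undefined outside Gc), so Id is restrict id Gc.\<close>
definition E_set :: "'a measure \<Rightarrow> ('a \<Rightarrow> 'a) \<Rightarrow> ('g::topological_space) set \<Rightarrow>
    ('g \<Rightarrow> 'g \<Rightarrow> 'g) \<Rightarrow> 'g measure \<Rightarrow> ('a \<Rightarrow> 'g) \<Rightarrow> ('g \<Rightarrow> 'g) set" where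
  "E_set M T Gc add H \<phi> = {w. w \<in> extensional Gc \<and> w ` Gc = Gc \<and> continuous_on Gc w \<and>
      (\<forall>a\<in>Gc. \<forall>b\<in>Gc. w (add a b) = add (w a) (w b)) \<and>
      (\<exists>S f. nonsingular M S \<and> (AE x in M. S (T x) = T (S x)) \<and>
         f \<in> M \<rightarrow>\<^sub>M H \<and> (\<forall>x\<in>space M. f x \<in> Gc) \<and>
         nonsingular (M \<Otimes>\<^sub>M H) (\<lambda>(x, y). (S x, add (f x) (w y))) \<and>
         (AE z in M \<Otimes>\<^sub>M H. (\<lambda>(x, y). (S x, add (f x) (w y))) (skew T add \<phi> z)
                          = skew T add \<phi> ((\<lambda>(x, y). (S x, add (f x) (w y))) z)))}"

definition aperiodic :: "'a measure \<Rightarrow> ('a \<Rightarrow> 'a) \<Rightarrow> ('g \<Rightarrow> 'g \<Rightarrow> 'g) \<Rightarrow> 'g measure \<Rightarrow>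
    ('a \<Rightarrow> 'g) \<Rightarrow> bool" where
  "aperiodic M T add H \<phi> \<longleftrightarrow>
     (\<forall>(f :: 'a \<times> 'g \<Rightarrow> complex) (c::complex).
        f \<in> borel_measurable (M \<Otimes>\<^sub>M H) \<and> (\<forall>z\<in>space (M \<Otimes>\<^sub>M H). f z \<in> circle) \<and>
        c \<in> circle \<and> (AE z in M \<Otimes>\<^sub>M H. f (skew T add \<phi> z) = c * f z)
        \<longrightarrow> (\<exists>g \<in> borel_measurable M. (\<forall>x\<in>space M. g x \<in> circle) \<and>
               (AE z in M \<Otimes>\<^sub>M H. f z = g (fst z))))"

end

theory Submission
  imports Defs
begin

text \<open>
  Let w be a non-identity element of E_phi, realised by Phi(x, y) = (S x, f0 x + w y), and let F be
  a circle-valued eigenfunction of T_phi. The fibre translations R_t(x, y) = (x, y + t) and Phi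
  commute with T_phi, so F o R_t and F o Phi are eigenfunctions for the same eigenvalue, and by
  ergodicity of T_phi they are constant multiples chi(t) F and kappa F of F. Comparing the two sides
  of Phi o R_t = R_(w t) o Phi gives chi(w t) = chi(t), i.e. chi(w t - t) = 1. For a continuous
  endomorphism w of the real line or of the circle other than the identity, t |-> w t - t is onto,
  so chi = 1: F is invariant under all fibre translations, and by Fubini it is a function of x alone.
\<close>

section \<open>Non-singular maps and ergodicity\<close>

lemma measure_preserving_nonsingular:
  assumes G: "G \<in> N \<rightarrow>\<^sub>M N" and "distr N N G = N"
  shows "nonsingular N G"
  using assms emeasure_distr[OF G] unfolding nonsingular_def by metis

lemma nonsingular_measurable: "nonsingular N G \<Longrightarrow> G \<in> N \<rightarrow>\<^sub>M N"
  by (simp add: nonsingular_def)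

lemma nonsingular_vimage_null:
  "nonsingular N G \<Longrightarrow> A \<in> null_sets N \<Longrightarrow> G -` A \<inter> space N \<in> null_sets N"
  unfolding nonsingular_def by (auto intro: measurable_sets)

lemma AE_comp_nonsingular:
  assumes G: "nonsingular N G" and "AE z in N. P z"
  shows "AE z in N. P (G z)"
proof -
  from \<open>AE z in N. P z\<close> obtain A where A: "{z \<in> space N. \<not> P z} \<subseteq> A" "A \<in> null_sets N"
    by (auto simp: eventually_ae_filter)
  have "{z \<in> space N. \<not> P (G z)} \<subseteq> G -` A \<inter> space N"
    using A(1) measurable_space[OF nonsingular_measurable[OF G]] by auto
  with nonsingular_vimage_null[OF G A(2)] show ?thesis
    by (rule AE_I')
qed

lemma AE_const_nonzero_space:
  "emeasure N (space N) \<noteq> 0 \<Longrightarrow> (AE z in N. P) \<longleftrightarrow> P"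
  by (simp add: ae_filter_eq_bot_iff)

lemma (in sigma_finite_measure) obtain_positive_integrable_function_nonzero_integral:
  assumes "emeasure M (space M) \<noteq> 0"
  obtains h :: "'a \<Rightarrow> real"
  where "h \<in> borel_measurable M" "\<And>x. 0 < h x" "integrable M h" "integral\<^sup>L M h \<noteq> 0"
proof -
  obtain h :: "'a \<Rightarrow> real" where h: "h \<in> borel_measurable M" "\<And>x. 0 < h x" "integrable M h"
    using obtain_positive_integrable_function by metis
  moreover have "integral\<^sup>L M h \<noteq> 0"
  proof
    assume "integral\<^sup>L M h = 0"
    then have "AE x in M. h x = 0"
      using h by (subst integral_nonneg_eq_0_iff_AE[symmetric]) (auto intro: less_imp_le)
    then have "AE x in M. False"
      by eventually_elim (metis h(2) less_irrefl)
    with assms show False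
      by (simp add: AE_const_nonzero_space)
  qed
  ultimately show ?thesis
    using that by blast
qed

lemma ergodic_AE_invariant_set:
  assumes erg: "ergodic N F" and F: "nonsingular N F"
    and A[measurable]: "A \<in> sets N" and inv: "AE z in N. F z \<in> A \<longleftrightarrow> z \<in> A"
  shows "emeasure N A = 0 \<or> emeasure N (space N - A) = 0"
proof -
  have Fm: "F \<in> N \<rightarrow>\<^sub>M N"
    using F by (rule nonsingular_measurable)
  have [measurable]: "F ^^ n \<in> N \<rightarrow>\<^sub>M N" for n
    by (induction n) (auto intro: measurable_compose[OF _ Fm])
  have "AE z in N. (F ^^ n) z \<in> A \<longleftrightarrow> z \<in> A" for n
  proof (induction n)
    case (Suc n)
    from inv AE_comp_nonsingular[OF F Suc] show ?case
      by eventually_elim (simp add: funpow_swap1)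
  qed simp
  then have AE_orbit: "AE z in N. \<forall>n. (F ^^ n) z \<in> A \<longleftrightarrow> z \<in> A"
    by (simp add: AE_all_countable)
  \<comment> \<open>The strictly invariant set of points visiting A infinitely often agrees with A a.e.\<close>
  define B where "B = {z \<in> space N. \<forall>n. \<exists>k\<ge>n. (F ^^ k) z \<in> A}"
  have B[measurable]: "B \<in> sets N"
    unfolding B_def by measurable
  have "(\<forall>n. \<exists>k\<ge>n. (F ^^ Suc k) z \<in> A) \<longleftrightarrow> (\<forall>n. \<exists>k\<ge>n. (F ^^ k) z \<in> A)" for z
    by (metis Suc_le_D Suc_le_mono le_SucI)
  then have "F -` B \<inter> space N = B"
    unfolding B_def using measurable_space[OF Fm] by (auto simp: funpow_swap1)
  with erg B have "emeasure N B = 0 \<or> emeasure N (space N - B) = 0"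
    unfolding ergodic_def by auto
  moreover have "AE z in N. z \<in> B \<longleftrightarrow> z \<in> A"
    using AE_orbit AE_space by eventually_elim (auto simp: B_def)
  then have "emeasure N B = emeasure N A" "emeasure N (space N - B) = emeasure N (space N - A)"
    by (auto intro!: emeasure_eq_AE)
  ultimately show ?thesis
    by simp
qed

lemma AE_eq_if_AE_squeeze:
  fixes q :: "_ \<Rightarrow> real"
  assumes below: "\<And>r. r < k \<Longrightarrow> AE z in N. r \<le> q z"
    and above: "\<And>r. k < r \<Longrightarrow> AE z in N. q z < r"
  shows "AE z in N. q z = k"
proof -
  have "AE z in N. \<forall>n::nat. k - 1 / Suc n \<le> q z \<and> q z < k + 1 / Suc n"
    unfolding AE_all_countable using below above by (auto intro: AE_conjI)
  then show ?thesis
  proof eventually_elim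
    case (elim z)
    show ?case
    proof (rule ccontr)
      assume "q z \<noteq> k"
      then have "0 < \<bar>q z - k\<bar>"
        by simp
      then obtain n where "1 / real (Suc n) < \<bar>q z - k\<bar>"
        by (metis nat_approx_posE of_nat_Suc)
      with elim[rule_format, of n] show False
        by (auto simp: abs_if split: if_splits)
    qed
  qed
qed

lemma ergodic_AE_invariant_real_const:
  assumes erg: "ergodic N F" and F: "nonsingular N F"
    and q[measurable]: "(q :: _ \<Rightarrow> real) \<in> borel_measurable N"
    and bound: "\<And>z. z \<in> space N \<Longrightarrow> \<bar>q z\<bar> \<le> B"
    and inv: "AE z in N. q (F z) = q z" and pos: "emeasure N (space N) \<noteq> 0"
  shows "\<exists>k. AE z in N. q z = k"
proof -
  define A where "A r = {z \<in> space N. q z < r}" for r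
  have A_sets[measurable]: "A r \<in> sets N" for r
    unfolding A_def by measurable
  have dichotomy: "emeasure N (A r) = 0 \<or> emeasure N (space N - A r) = 0" for r
  proof (rule ergodic_AE_invariant_set[OF erg F])
    show "AE z in N. F z \<in> A r \<longleftrightarrow> z \<in> A r"
      using inv AE_space
      by eventually_elim (auto simp: A_def measurable_space[OF nonsingular_measurable[OF F]])
  qed simp
  define L where "L = {r. emeasure N (A r) = 0}"
  have "- B - 1 \<in> L"
  proof -
    have "A (- B - 1) = {}"
      unfolding A_def using bound by force
    then show ?thesis
      unfolding L_def by simp
  qed
  moreover have "r \<le> B + 1" if "r \<in> L" for r
  proof (rule ccontr)
    assume "\<not> r \<le> B + 1"
    then have "A r = space N"
      unfolding A_def using bound by force
    with that pos show False
      unfolding L_def by simp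
  qed
  then have bdd: "bdd_above L"
    by (rule bdd_aboveI)
  \<comment> \<open>k is the essential infimum of q; by ergodicity each set q < r with r > k is conull.\<close>
  define k where "k = Sup L"
  have below: "AE z in N. r \<le> q z" if "r < k" for r
  proof -
    obtain r' where "r' \<in> L" "r < r'"
      using \<open>r < k\<close> \<open>- B - 1 \<in> L\<close> bdd unfolding k_def by (metis empty_iff less_cSup_iff)
    then have "A r \<in> null_sets N"
      using emeasure_mono[of "A r" "A r'" N]
      unfolding L_def A_def by (auto intro: antisym simp: subset_eq)
    with AE_space show ?thesis
      by (auto simp: A_def dest!: AE_not_in elim!: AE_mp)
  qed
  have above: "AE z in N. q z < r" if "k < r" for r
  proof -
    have "r \<notin> L"
      using that cSup_upper[OF _ bdd] unfolding k_def by force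
    then have "space N - A r \<in> null_sets N"
      using dichotomy[of r] A_sets[of r] unfolding L_def by blast
    with AE_space show ?thesis
      by (auto simp: A_def dest!: AE_not_in elim!: AE_mp)
  qed
  from below above show ?thesis
    by (blast intro: AE_eq_if_AE_squeeze)
qed

lemma ergodic_AE_invariant_complex_const:
  assumes erg: "ergodic N F" and F: "nonsingular N F"
    and q[measurable]: "(q :: _ \<Rightarrow> complex) \<in> borel_measurable N"
    and bound: "\<And>z. z \<in> space N \<Longrightarrow> norm (q z) \<le> B"
    and inv: "AE z in N. q (F z) = q z" and pos: "emeasure N (space N) \<noteq> 0"
  shows "\<exists>k. AE z in N. q z = k"
proof -
  have "\<exists>a. AE z in N. Re (q z) = a"
    by (rule ergodic_AE_invariant_real_const[OF erg F _ order_trans[OF abs_Re_le_cmod bound] _ pos])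
      (use inv in auto)
  then obtain a where a: "AE z in N. Re (q z) = a" ..
  have "\<exists>b. AE z in N. Im (q z) = b"
    by (rule ergodic_AE_invariant_real_const[OF erg F _ order_trans[OF abs_Im_le_cmod bound] _ pos])
      (use inv in auto)
  then obtain b where b: "AE z in N. Im (q z) = b" ..
  from a b have "AE z in N. q z = Complex a b"
    by eventually_elim (simp add: complex_eq_iff)
  then show ?thesis
    by blast
qed

section \<open>Circle-valued eigenfunctions\<close>

definition circle_eigenfunction :: "'a measure \<Rightarrow> ('a \<Rightarrow> 'a) \<Rightarrow> ('a \<Rightarrow> complex) \<Rightarrow> complex \<Rightarrow> bool"
  where "circle_eigenfunction N F f c \<longleftrightarrow> f \<in> borel_measurable N \<and> (\<forall>z\<in>space N. f z \<in> circle) \<and>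
      c \<in> circle \<and> (AE z in N. f (F z) = c * f z)"

lemma aperiodic_iff_eigenfunctions:
  "aperiodic M T add H \<phi> \<longleftrightarrow>
     (\<forall>f c. circle_eigenfunction (M \<Otimes>\<^sub>M H) (skew T add \<phi>) f c \<longrightarrow>
        (\<exists>g \<in> borel_measurable M. (\<forall>x\<in>space M. g x \<in> circle) \<and>
           (AE z in M \<Otimes>\<^sub>M H. f z = g (fst z))))"
  by (simp add: aperiodic_def circle_eigenfunction_def)

lemma circle_iff_norm_eq_1: "z \<in> circle \<longleftrightarrow> norm z = 1"
  by (simp add: circle_def)

lemma circle_sets_borel[measurable]: "circle \<in> sets borel"
  by (simp add: circle_def borel_closed)

lemma circle_nonzero: "z \<in> circle \<Longrightarrow> z \<noteq> 0"
  by (auto simp: circle_iff_norm_eq_1)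

lemma circle_eigenfunction_comp:
  assumes f: "circle_eigenfunction N F f c" and G: "nonsingular N G"
    and commute: "AE z in N. G (F z) = F (G z)"
  shows "circle_eigenfunction N F (\<lambda>z. f (G z)) c"
proof -
  have "AE z in N. f (F (G z)) = c * f (G z)"
    using f by (intro AE_comp_nonsingular[OF G]) (simp add: circle_eigenfunction_def)
  with commute have "AE z in N. f (G (F z)) = c * f (G z)"
    by eventually_elim simp
  with f show ?thesis
    using nonsingular_measurable[OF G]
    by (auto simp: circle_eigenfunction_def measurable_space intro: measurable_compose)
qed

lemma circle_eigenfunctions_proportional:
  assumes erg: "ergodic N F" and F: "nonsingular N F" and pos: "emeasure N (space N) \<noteq> 0"
    and f: "circle_eigenfunction N F f c" and g: "circle_eigenfunction N F g c"
  shows "\<exists>k\<in>circle. AE z in N. g z = k * f z"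
proof -
  have [measurable]: "f \<in> borel_measurable N" "g \<in> borel_measurable N"
    using f g by (simp_all add: circle_eigenfunction_def)
  have norm_quotient: "norm (g z / f z) = 1" if "z \<in> space N" for z
    using f g that by (simp add: circle_eigenfunction_def norm_divide circle_iff_norm_eq_1)
  have "\<exists>k. AE z in N. g z / f z = k"
  proof (rule ergodic_AE_invariant_complex_const[OF erg F _ _ _ pos, where B = 1])
    have "c \<noteq> 0"
      using f by (simp add: circle_eigenfunction_def circle_nonzero)
    moreover have "AE z in N. f (F z) = c * f z" "AE z in N. g (F z) = c * g z"
      using f g by (simp_all add: circle_eigenfunction_def)
    ultimately show "AE z in N. g (F z) / f (F z) = g z / f z"
      by (elim AE_mp) (auto intro!: AE_I2)
  qed (use norm_quotient in simp_all)
  then obtain k where k: "AE z in N. g z / f z = k"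
    by blast
  have "AE z in N. norm k = 1"
    using k AE_space by eventually_elim (use norm_quotient in blast)
  then have "k \<in> circle"
    using pos by (simp add: AE_const_nonzero_space circle_iff_norm_eq_1)
  moreover have "AE z in N. g z = k * f z"
    using k AE_space
    by eventually_elim (use f in \<open>auto simp: circle_eigenfunction_def circle_nonzero field_simps\<close>)
  ultimately show ?thesis
    by blast
qed

section \<open>Skew products over an abelian group with invariant measure\<close>

locale skew_product =
  fixes M :: "'a measure" and T :: "'a \<Rightarrow> 'a" and Gc :: "'g::topological_space set"
    and add :: "'g \<Rightarrow> 'g \<Rightarrow> 'g" and H :: "'g measure"
  assumes prob_space_M: "prob_space M"
    and T_measurable: "T \<in> M \<rightarrow>\<^sub>M M" and T_preserving: "distr M M T = M"
    and sigma_finite_H: "sigma_finite_measure H"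
    and space_H: "space H = Gc"
    and emeasure_H_nonzero: "emeasure H Gc \<noteq> 0"
    and add_assoc: "\<And>a b c. add (add a b) c = add a (add b c)"
    and add_commute: "\<And>a b. add a b = add b a"
    and add_measurable: "(\<lambda>p. add (fst p) (snd p)) \<in> H \<Otimes>\<^sub>M H \<rightarrow>\<^sub>M H"
    and H_translation_invariant: "\<And>t. t \<in> Gc \<Longrightarrow> distr H H (\<lambda>y. add y t) = H"
begin

abbreviation "\<nu> \<equiv> M \<Otimes>\<^sub>M H"

lemma add_closed: "a \<in> Gc \<Longrightarrow> b \<in> Gc \<Longrightarrow> add a b \<in> Gc"
  using measurable_space[OF add_measurable, of "(a, b)"] space_H
  by (auto simp: space_pair_measure)

lemma measurable_add:
  assumes "f \<in> N \<rightarrow>\<^sub>M H" "g \<in> N \<rightarrow>\<^sub>M H"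
  shows "(\<lambda>x. add (f x) (g x)) \<in> N \<rightarrow>\<^sub>M H"
  using measurable_compose[OF measurable_Pair[OF assms] add_measurable] by simp

lemma shear_measurable:
  assumes h: "h \<in> M \<rightarrow>\<^sub>M M" and K: "K \<in> M \<rightarrow>\<^sub>M H"
  shows "(\<lambda>(x, y). (h x, add y (K x))) \<in> \<nu> \<rightarrow>\<^sub>M \<nu>"
proof -
  have "(\<lambda>z. (h (fst z), add (snd z) (K (fst z)))) \<in> \<nu> \<rightarrow>\<^sub>M \<nu>"
    by (intro measurable_Pair measurable_add measurable_compose[OF measurable_fst h]
        measurable_compose[OF measurable_fst K] measurable_snd)
  then show ?thesis
    by (simp add: case_prod_beta')
qed

lemma shear_measure_preserving:
  assumes h: "h \<in> M \<rightarrow>\<^sub>M M" "distr M M h = M" and K: "K \<in> M \<rightarrow>\<^sub>M H"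
  shows "distr \<nu> \<nu> (\<lambda>(x, y). (h x, add y (K x))) = \<nu>"
proof (rule measure_eqI)
  interpret H: sigma_finite_measure H
    by (rule sigma_finite_H)
  let ?G = "\<lambda>(x, y). (h x, add y (K x))"
  fix A assume "A \<in> sets (distr \<nu> \<nu> ?G)"
  then have A: "A \<in> sets \<nu>"
    by simp
  have "emeasure (distr \<nu> \<nu> ?G) A = emeasure \<nu> (?G -` A \<inter> space \<nu>)"
    by (rule emeasure_distr[OF shear_measurable[OF h(1) K] A])
  also have "\<dots> = (\<integral>\<^sup>+x. emeasure H (Pair x -` (?G -` A \<inter> space \<nu>)) \<partial>M)"
    by (rule H.emeasure_pair_measure_alt[OF measurable_sets[OF shear_measurable[OF h(1) K] A]])
  also have "\<dots> = (\<integral>\<^sup>+x. emeasure H (Pair (h x) -` A) \<partial>M)"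
  proof (rule nn_integral_cong)
    fix x assume x: "x \<in> space M"
    have Kx: "K x \<in> Gc"
      using measurable_space[OF K x] space_H by simp
    have "Pair x -` (?G -` A \<inter> space \<nu>) = (\<lambda>y. add y (K x)) -` (Pair (h x) -` A) \<inter> space H"
      using x by (auto simp: space_pair_measure)
    then have "emeasure H (Pair x -` (?G -` A \<inter> space \<nu>))
        = emeasure (distr H H (\<lambda>y. add y (K x))) (Pair (h x) -` A)"
      by (subst emeasure_distr)
        (auto intro!: sets_Pair1[OF A] measurable_add measurable_const simp: Kx space_H)
    then show "emeasure H (Pair x -` (?G -` A \<inter> space \<nu>)) = emeasure H (Pair (h x) -` A)"
      using H_translation_invariant[OF Kx] by simp
  qed
  also have "\<dots> = (\<integral>\<^sup>+x. emeasure H (Pair x -` A) \<partial>distr M M h)"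
    by (rule nn_integral_distr[symmetric, OF h(1)]) (simp add: H.measurable_emeasure_Pair[OF A])
  also have "\<dots> = emeasure \<nu> A"
    using h(2) H.emeasure_pair_measure_alt[OF A] by simp
  finally show "emeasure (distr \<nu> \<nu> ?G) A = emeasure \<nu> A" .
qed simp

lemma nonsingular_shear:
  assumes "h \<in> M \<rightarrow>\<^sub>M M" "distr M M h = M" "K \<in> M \<rightarrow>\<^sub>M H"
  shows "nonsingular \<nu> (\<lambda>(x, y). (h x, add y (K x)))"
  using assms by (intro measure_preserving_nonsingular shear_measurable shear_measure_preserving)

lemma emeasure_space_nonzero: "emeasure \<nu> (space \<nu>) \<noteq> 0"
proof -
  interpret H: sigma_finite_measure H
    by (rule sigma_finite_H)
  have "emeasure \<nu> (space \<nu>) = emeasure M (space M) * emeasure H (space H)"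
    by (simp add: space_pair_measure H.emeasure_pair_measure_Times)
  then show ?thesis
    using emeasure_H_nonzero space_H prob_space.emeasure_space_1[OF prob_space_M] by simp
qed

definition fibre_shift :: "'g \<Rightarrow> 'a \<times> 'g \<Rightarrow> 'a \<times> 'g"
  where "fibre_shift t = (\<lambda>(x, y). (x, add y t))"

lemma nonsingular_fibre_shift: "t \<in> Gc \<Longrightarrow> nonsingular \<nu> (fibre_shift t)"
  unfolding fibre_shift_def
  using nonsingular_shear[of "\<lambda>x. x" "\<lambda>_. t"] space_H by (simp add: distr_id2)

lemma nonsingular_skew: "\<phi> \<in> M \<rightarrow>\<^sub>M H \<Longrightarrow> nonsingular \<nu> (skew T add \<phi>)"
  unfolding skew_def by (rule nonsingular_shear[OF T_measurable T_preserving])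

lemma fibre_shift_skew_commute: "fibre_shift t (skew T add \<phi> z) = skew T add \<phi> (fibre_shift t z)"
  unfolding fibre_shift_def skew_def by (auto split: prod.splits) (metis add_assoc add_commute)

lemma eigenfunction_fibre_shift_proportional:
  assumes \<phi>: "\<phi> \<in> M \<rightarrow>\<^sub>M H" and erg: "ergodic \<nu> (skew T add \<phi>)"
    and f: "circle_eigenfunction \<nu> (skew T add \<phi>) f c" and t: "t \<in> Gc"
  shows "\<exists>k\<in>circle. AE z in \<nu>. f (fibre_shift t z) = k * f z"
proof (rule circle_eigenfunctions_proportional[OF erg nonsingular_skew[OF \<phi>] emeasure_space_nonzero f])
  show "circle_eigenfunction \<nu> (skew T add \<phi>) (\<lambda>z. f (fibre_shift t z)) c"
    by (rule circle_eigenfunction_comp[OF f nonsingular_fibre_shift[OF t]])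
      (simp add: fibre_shift_skew_commute)
qed

lemma eigenfunction_invariant_if_intertwines_fibre_shifts:
  assumes \<phi>: "\<phi> \<in> M \<rightarrow>\<^sub>M H" and erg: "ergodic \<nu> (skew T add \<phi>)"
    and f: "circle_eigenfunction \<nu> (skew T add \<phi>) f c"
    and \<Phi>: "nonsingular \<nu> \<Phi>" and commute: "AE z in \<nu>. \<Phi> (skew T add \<phi> z) = skew T add \<phi> (\<Phi> z)"
    and "t \<in> Gc" "u \<in> Gc"
    and intertwine: "\<And>z. z \<in> space \<nu> \<Longrightarrow> \<Phi> (fibre_shift t z) = fibre_shift u (fibre_shift t (\<Phi> z))"
  shows "AE z in \<nu>. f (fibre_shift u z) = f z"
proof -
  obtain \<kappa> where "\<kappa> \<in> circle" and \<kappa>: "AE z in \<nu>. f (\<Phi> z) = \<kappa> * f z"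
    using circle_eigenfunctions_proportional[OF erg nonsingular_skew[OF \<phi>] emeasure_space_nonzero f
        circle_eigenfunction_comp[OF f \<Phi> commute]] by blast
  obtain \<chi>\<^sub>t where "\<chi>\<^sub>t \<in> circle" and \<chi>\<^sub>t: "AE z in \<nu>. f (fibre_shift t z) = \<chi>\<^sub>t * f z"
    using eigenfunction_fibre_shift_proportional[OF \<phi> erg f \<open>t \<in> Gc\<close>] by blast
  obtain \<chi>\<^sub>u where \<chi>\<^sub>u: "AE z in \<nu>. f (fibre_shift u z) = \<chi>\<^sub>u * f z"
    using eigenfunction_fibre_shift_proportional[OF \<phi> erg f \<open>u \<in> Gc\<close>] by blast
  have "AE z in \<nu>. f (\<Phi> (fibre_shift t z)) = \<kappa> * (\<chi>\<^sub>t * f z)"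
    using AE_comp_nonsingular[OF nonsingular_fibre_shift[OF \<open>t \<in> Gc\<close>] \<kappa>] \<chi>\<^sub>t by eventually_elim simp
  moreover have "AE z in \<nu>. f (fibre_shift u (fibre_shift t (\<Phi> z))) = \<chi>\<^sub>u * (\<chi>\<^sub>t * (\<kappa> * f z))"
    using AE_comp_nonsingular[OF \<Phi> AE_comp_nonsingular[OF nonsingular_fibre_shift[OF \<open>t \<in> Gc\<close>] \<chi>\<^sub>u]]
      AE_comp_nonsingular[OF \<Phi> \<chi>\<^sub>t] \<kappa>
    by eventually_elim simp
  ultimately have "AE z in \<nu>. \<chi>\<^sub>u = 1"
    using AE_space
  proof eventually_elim
    case (elim z)
    have "\<kappa> * (\<chi>\<^sub>t * f z) = f (\<Phi> (fibre_shift t z))"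
      using elim(1) by simp
    also have "\<dots> = \<chi>\<^sub>u * (\<chi>\<^sub>t * (\<kappa> * f z))"
      using elim(2) intertwine[OF elim(3)] by simp
    finally have "\<kappa> * (\<chi>\<^sub>t * f z) = \<chi>\<^sub>u * (\<chi>\<^sub>t * (\<kappa> * f z))" .
    moreover have "\<kappa> * (\<chi>\<^sub>t * f z) \<noteq> 0"
      using f elim \<open>\<kappa> \<in> circle\<close> \<open>\<chi>\<^sub>t \<in> circle\<close> by (simp add: circle_eigenfunction_def circle_nonzero)
    ultimately show ?case
      by (simp add: mult_ac)
  qed
  then show ?thesis
    using \<chi>\<^sub>u emeasure_space_nonzero by (simp add: AE_const_nonzero_space)
qed

lemma E_set_eigenfunction_fibre_shift_invariant:
  assumes \<phi>: "\<phi> \<in> M \<rightarrow>\<^sub>M H" and erg: "ergodic \<nu> (skew T add \<phi>)"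
    and f: "circle_eigenfunction \<nu> (skew T add \<phi>) f c"
    and w: "w \<in> E_set M T Gc add H \<phi>" and t: "t \<in> Gc" "w t = add t u" and "u \<in> Gc"
  shows "AE z in \<nu>. f (fibre_shift u z) = f z"
proof -
  from w obtain S f0 where hom: "\<forall>a\<in>Gc. \<forall>b\<in>Gc. w (add a b) = add (w a) (w b)"
    and \<Phi>: "nonsingular \<nu> (\<lambda>(x, y). (S x, add (f0 x) (w y)))"
    and commute: "AE z in \<nu>. (\<lambda>(x, y). (S x, add (f0 x) (w y))) (skew T add \<phi> z)
                          = skew T add \<phi> ((\<lambda>(x, y). (S x, add (f0 x) (w y))) z)"
    unfolding E_set_def by blast
  show ?thesis
  proof (rule eigenfunction_invariant_if_intertwines_fibre_shifts[OF \<phi> erg f \<Phi> commute t(1) \<open>u \<in> Gc\<close>])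
    fix z assume "z \<in> space \<nu>"
    then obtain x y where "z = (x, y)" and "y \<in> Gc"
      using space_H by (cases z) (auto simp: space_pair_measure)
    then show "(\<lambda>(x, y). (S x, add (f0 x) (w y))) (fibre_shift t z)
        = fibre_shift u (fibre_shift t ((\<lambda>(x, y). (S x, add (f0 x) (w y))) z))"
      using hom t by (simp add: fibre_shift_def add_closed add_assoc)
  qed
qed

lemma AE_fibre_const_if_fibre_shift_invariant:
  fixes f :: "'a \<times> 'g \<Rightarrow> 'b::{second_countable_topology, t2_space}"
  assumes f[measurable]: "f \<in> borel_measurable \<nu>"
    and invariant: "\<And>u. u \<in> Gc \<Longrightarrow> AE z in \<nu>. f (fibre_shift u z) = f z"
  shows "AE z in \<nu>. AE s in H. f (fst z, s) = f z"
proof -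
  interpret H: sigma_finite_measure H
    by (rule sigma_finite_H)
  interpret M: prob_space M
    by (rule prob_space_M)
  interpret \<nu>H: pair_sigma_finite \<nu> H
    by (intro pair_sigma_finite.intro sigma_finite_pair_measure H.sigma_finite_measure_axioms
        M.sigma_finite_measure_axioms)
  have shift_measurable: "(\<lambda>p. fibre_shift (snd p) (fst p)) \<in> \<nu> \<Otimes>\<^sub>M H \<rightarrow>\<^sub>M \<nu>"
  proof -
    have "(\<lambda>p. (fst (fst p), add (snd (fst p)) (snd p))) \<in> \<nu> \<Otimes>\<^sub>M H \<rightarrow>\<^sub>M \<nu>"
      by (intro measurable_Pair measurable_add measurable_compose[OF measurable_fst measurable_fst]
          measurable_compose[OF measurable_fst measurable_snd] measurable_snd)
    then show ?thesis
      by (simp add: fibre_shift_def case_prod_beta')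
  qed
  have "{p \<in> space (\<nu> \<Otimes>\<^sub>M H). f (fibre_shift (snd p) (fst p)) = f (fst p)} \<in> sets (\<nu> \<Otimes>\<^sub>M H)"
    using shift_measurable[measurable] by measurable
  moreover have "AE t in H. AE z in \<nu>. f (fibre_shift t z) = f z"
    by (rule AE_I2) (simp add: invariant space_H)
  ultimately have "AE z in \<nu>. AE t in H. f (fibre_shift t z) = f z"
    by (simp add: \<nu>H.AE_commute)
  then show ?thesis
    using AE_space
  proof eventually_elim
    case (elim z)
    obtain x y where z: "z = (x, y)" and x: "x \<in> space M" and y: "y \<in> Gc"
      using elim(2) space_H by (cases z) (auto simp: space_pair_measure)
    have "add y = (\<lambda>s. add s y)"
      using add_commute by blast
    then have distr_add_y: "distr H H (add y) = H"
      using H_translation_invariant[OF y] by simp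
    have add_y: "add y \<in> H \<rightarrow>\<^sub>M H"
      using y space_H by (intro measurable_add[where f = "\<lambda>_. y" and g = "\<lambda>s. s", simplified]) auto
    have [measurable]: "(\<lambda>s. f (x, s)) \<in> borel_measurable H"
      by (rule measurable_Pair2[OF f x])
    have "AE t in H. f (x, add y t) = f (x, y)"
      using elim(1) by (simp add: z fibre_shift_def add_commute)
    then have "AE s in distr H H (add y). f (x, s) = f (x, y)"
      by (subst AE_distr_iff[OF add_y]) auto
    then show ?case
      unfolding distr_add_y z by simp
  qed
qed

lemma fibre_shift_invariant_depends_fst:
  assumes f[measurable]: "f \<in> borel_measurable \<nu>" and circle_valued: "\<And>z. z \<in> space \<nu> \<Longrightarrow> f z \<in> circle"
    and invariant: "\<And>u. u \<in> Gc \<Longrightarrow> AE z in \<nu>. f (fibre_shift u z) = f z"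
  shows "\<exists>g \<in> borel_measurable M. (\<forall>x\<in>space M. g x \<in> circle) \<and> (AE z in \<nu>. f z = g (fst z))"
proof -
  interpret H: sigma_finite_measure H
    by (rule sigma_finite_H)
  obtain h :: "'g \<Rightarrow> real" where [measurable]: "h \<in> borel_measurable H"
    and "integrable H h" "integral\<^sup>L H h \<noteq> 0"
    using H.obtain_positive_integrable_function_nonzero_integral emeasure_H_nonzero space_H by metis
  \<comment> \<open>Averaging f(x, -) against the density h recovers its a.e. constant value.\<close>
  define g0 where "g0 x = (\<integral>s. h s *\<^sub>R f (x, s) \<partial>H) / integral\<^sup>L H h" for x
  have [measurable]: "g0 \<in> borel_measurable M"
    unfolding g0_def by measurable
  have "AE z in \<nu>. AE s in H. f (fst z, s) = f z"
    using f invariant by (rule AE_fibre_const_if_fibre_shift_invariant)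
  then have f_eq_g0: "AE z in \<nu>. f z = g0 (fst z)"
    using AE_space
  proof eventually_elim
    case (elim z)
    then have "(\<integral>s. h s *\<^sub>R f (fst z, s) \<partial>H) = (\<integral>s. h s *\<^sub>R f z \<partial>H)"
      by (intro integral_cong_AE) (auto simp: space_pair_measure)
    then show ?case
      using \<open>integrable H h\<close> \<open>integral\<^sup>L H h \<noteq> 0\<close> by (simp add: g0_def scaleR_conv_of_real)
  qed
  define g where "g x = (if g0 x \<in> circle then g0 x else 1)" for x
  have "AE z in \<nu>. f z = g (fst z)"
    using f_eq_g0 AE_space by eventually_elim (metis circle_valued g_def)
  moreover have "g \<in> borel_measurable M"
    unfolding g_def by measurable
  moreover have "\<forall>x\<in>space M. g x \<in> circle"
    by (simp add: g_def circle_def)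
  ultimately show ?thesis
    by blast
qed

lemma aperiodic_if_E_set_shift_surjective:
  assumes \<phi>: "\<phi> \<in> M \<rightarrow>\<^sub>M H" and erg: "ergodic \<nu> (skew T add \<phi>)"
    and w: "w \<in> E_set M T Gc add H \<phi>" and surj: "\<And>u. u \<in> Gc \<Longrightarrow> \<exists>t\<in>Gc. w t = add t u"
  shows "aperiodic M T add H \<phi>"
  unfolding aperiodic_iff_eigenfunctions
proof (intro allI impI)
  fix f c
  assume f: "circle_eigenfunction \<nu> (skew T add \<phi>) f c"
  have "AE z in \<nu>. f (fibre_shift u z) = f z" if "u \<in> Gc" for u
    using surj[OF that] E_set_eigenfunction_fibre_shift_invariant[OF \<phi> erg f w _ _ that] by blast
  with f show "\<exists>g\<in>borel_measurable M. (\<forall>x\<in>space M. g x \<in> circle) \<and> (AE z in \<nu>. f z = g (fst z))"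
    by (intro fibre_shift_invariant_depends_fst) (auto simp: circle_eigenfunction_def)
qed

lemma restrict_id_in_E_set:
  assumes \<phi>: "\<phi> \<in> M \<rightarrow>\<^sub>M H" and e: "e \<in> Gc" "\<And>y. y \<in> Gc \<Longrightarrow> add e y = y"
  shows "restrict id Gc \<in> E_set M T Gc add H \<phi>"
proof -
  let ?\<Phi> = "\<lambda>(x, y). (x, add e (restrict id Gc y))"
  have \<Phi>_id: "?\<Phi> z = z" if "z \<in> space \<nu>" for z
    using that e space_H by (auto simp: space_pair_measure)
  have "nonsingular \<nu> ?\<Phi>"
  proof -
    have "?\<Phi> \<in> \<nu> \<rightarrow>\<^sub>M \<nu>"
      using measurable_cong[of \<nu> ?\<Phi> "\<lambda>z. z"] \<Phi>_id by simp
    moreover have "?\<Phi> -` A \<inter> space \<nu> = A" if "A \<in> sets \<nu>" for A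
      using sets.sets_into_space[OF that] \<Phi>_id by auto
    ultimately show ?thesis
      unfolding nonsingular_def by simp
  qed
  moreover have "nonsingular M (\<lambda>x. x)"
    by (auto simp: nonsingular_def Int_absorb2 sets.sets_into_space)
  moreover have "AE z in \<nu>. ?\<Phi> (skew T add \<phi> z) = skew T add \<phi> (?\<Phi> z)"
    using AE_space
  proof eventually_elim
    case (elim z)
    then show ?case
      using \<Phi>_id measurable_space[OF nonsingular_measurable[OF nonsingular_skew[OF \<phi>]] elim] by simp
  qed
  moreover have "continuous_on Gc (restrict id Gc)"
    by (rule continuous_on_cong[THEN iffD2, OF refl _ continuous_on_id]) simp
  ultimately show ?thesis
    unfolding E_set_def using e space_H add_closed
    by (intro CollectI conjI exI[of _ "\<lambda>x. x"] exI[of _ "\<lambda>_. e"]) auto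
qed

end

section \<open>The real line\<close>

lemma additive_continuous_real_linear:
  fixes f :: "real \<Rightarrow> 'b::real_normed_vector"
  assumes add: "\<And>x y. f (x + y) = f x + f y" and cont: "continuous_on UNIV f"
  shows "f x = x *\<^sub>R f 1"
proof -
  have f0: "f 0 = 0"
    using add[of 0 0] by simp
  have f_nat: "f (real n * y) = real n *\<^sub>R f y" for n y
    by (induction n) (auto simp: f0 add distrib_right scaleR_add_left)
  have f_neg: "f (- y) = - f y" for y
    using add[of y "- y"] f0 by (simp add: add_eq_0_iff2)
  have f_int: "f (of_int i * y) = of_int i *\<^sub>R f y" for i y
  proof (cases "0 \<le> i")
    case True
    then show ?thesis
      using f_nat[of "nat i" y] by simp
  next
    case False
    then show ?thesis
      using f_nat[of "nat (- i)" y] f_neg[of "real (nat (- i)) * y"] by simp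
  qed
  have f_rat: "f q - q *\<^sub>R f 1 = 0" if "q \<in> \<rat>" for q
  proof -
    obtain a b where q: "q = of_int a / of_int b" and b: "b \<noteq> 0"
      using \<open>q \<in> \<rat>\<close> by (auto elim!: Rats_cases')
    have "of_int b *\<^sub>R f q = f (of_int a * 1)"
      using f_int[of b q] q b by simp
    also have "\<dots> = of_int a *\<^sub>R f 1"
      by (rule f_int)
    finally have "inverse (of_int b) *\<^sub>R (of_int b *\<^sub>R f q) = inverse (of_int b) *\<^sub>R (of_int a *\<^sub>R f 1)"
      by (rule arg_cong)
    then show ?thesis
      using b by (simp add: q divide_inverse mult.commute)
  qed
  have cont_diff: "continuous_on (closure \<rat>) (\<lambda>x. f x - x *\<^sub>R f 1)"
    unfolding Rats_closure_real
    by (intro continuous_on_diff cont continuous_on_scaleR continuous_on_id continuous_on_const)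
  have "(\<lambda>x. f x - x *\<^sub>R f 1) x = 0"
    by (rule continuous_constant_on_closure[OF cont_diff]) (simp_all add: f_rat Rats_closure_real)
  then show ?thesis
    by simp
qed

lemma additive_continuous_real_shift_surj:
  fixes w :: "real \<Rightarrow> real"
  assumes add: "\<And>x y. w (x + y) = w x + w y" and cont: "continuous_on UNIV w" and "w \<noteq> id"
  shows "\<exists>t. w t = t + u"
proof -
  define a where "a = w 1"
  have w_linear: "w x = a * x" for x
    using additive_continuous_real_linear[OF add cont, of x] by (simp add: a_def mult.commute)
  then have "a \<noteq> 1"
    using \<open>w \<noteq> id\<close> by auto
  then have "w (u / (a - 1)) = u / (a - 1) + u"
    by (simp add: w_linear field_simps)
  then show ?thesis
    by blast
qed

lemma skew_product_real:
  assumes "prob_space M" "T \<in> M \<rightarrow>\<^sub>M M" "distr M M T = M"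
  shows "skew_product M T UNIV (+) (lborel :: real measure)"
proof -
  have "distr lborel lborel (\<lambda>y. y + t) = (lborel :: real measure)" for t :: real
    using lborel_distr_plus[of t] by (simp add: add.commute cong: distr_cong)
  moreover have "(\<lambda>p. fst p + snd p) \<in> lborel \<Otimes>\<^sub>M lborel \<rightarrow>\<^sub>M (lborel :: real measure)"
    by (simp add: measurable_lborel2)
  ultimately show ?thesis
    unfolding skew_product_def using assms lborel.sigma_finite_measure_axioms
    by (auto simp: add.assoc add.commute)
qed

lemma aperiodic_real:
  fixes \<phi> :: "'a \<Rightarrow> real"
  assumes M: "prob_space M" "T \<in> M \<rightarrow>\<^sub>M M" "distr M M T = M"
    and \<phi>: "\<phi> \<in> borel_measurable M" and erg: "ergodic (M \<Otimes>\<^sub>M lborel) (skew T (+) \<phi>)"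
    and E: "E_set M T UNIV (+) lborel \<phi> \<noteq> {id}"
  shows "aperiodic M T (+) lborel \<phi>"
proof -
  interpret skew_product M T UNIV "(+)" "lborel :: real measure"
    using skew_product_real[OF M] .
  have \<phi>': "\<phi> \<in> M \<rightarrow>\<^sub>M lborel"
    using \<phi> by (simp add: measurable_lborel2)
  have "id \<in> E_set M T UNIV (+) lborel \<phi>"
    using restrict_id_in_E_set[OF \<phi>', of 0] by (simp add: restrict_UNIV)
  with E obtain w where w: "w \<in> E_set M T UNIV (+) lborel \<phi>" "w \<noteq> id"
    by blast
  have "w (x + y) = w x + w y" for x y
    using w(1) unfolding E_set_def by simp
  moreover have "continuous_on UNIV w"
    using w(1) unfolding E_set_def by simp
  ultimately have "\<exists>t\<in>UNIV. w t = t + u" for u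
    using additive_continuous_real_shift_surj[of w u] w(2) by simp
  then show ?thesis
    by (rule aperiodic_if_E_set_shift_surjective[OF \<phi>' erg w(1)])
qed

section \<open>The circle\<close>

abbreviation unit_interval :: "real measure"
  where "unit_interval \<equiv> restrict_space lborel {0..<1}"

abbreviation wrap :: "real \<Rightarrow> complex"
  where "wrap t \<equiv> cis (2 * pi * t)"

lemma wrap_in_circle: "wrap t \<in> circle"
  by (simp add: circle_def)

lemma wrap_add: "wrap (s + t) = wrap s * wrap t"
  by (simp add: distrib_left cis_mult)

lemma wrap_add_1: "wrap (t + 1) = wrap t"
  by (simp add: wrap_add)

lemma wrap_borel_measurable[measurable]: "wrap \<in> borel_measurable borel"
  by (intro borel_measurable_continuous_onI continuous_intros)

lemma wrap_measurable: "wrap \<in> unit_interval \<rightarrow>\<^sub>M restrict_space borel circle"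
  by (intro measurable_restrict_space2 measurable_restrict_space1)
    (auto simp: wrap_in_circle measurable_lborel1)

lemma space_circle_measure: "space circle_measure = circle"
  by (simp add: circle_measure_def space_restrict_space)

lemma sets_circle_measure: "sets circle_measure = sets (restrict_space borel circle)"
  by (simp add: circle_measure_def)

lemma sets_circle_measure_iff: "A \<in> sets circle_measure \<longleftrightarrow> A \<subseteq> circle \<and> A \<in> sets borel"
  unfolding sets_circle_measure by (subst sets_restrict_space_iff) auto

lemma prob_space_circle_measure: "prob_space circle_measure"
proof -
  have "prob_space unit_interval"
    by (rule prob_spaceI) (simp add: space_restrict_space emeasure_restrict_space)
  then show ?thesis
    unfolding circle_measure_def by (rule prob_space.prob_space_distr[OF _ wrap_measurable])
qed

lemma emeasure_circle_measure:
  assumes "A \<in> sets circle_measure"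
  shows "emeasure circle_measure A = emeasure lborel ({0..<1} \<inter> wrap -` A)"
proof -
  have "emeasure circle_measure A = emeasure unit_interval (wrap -` A \<inter> space unit_interval)"
    using assms unfolding circle_measure_def by (subst emeasure_distr[OF wrap_measurable]) auto
  also have "\<dots> = emeasure lborel ({0..<1} \<inter> wrap -` A)"
    by (subst emeasure_restrict_space) (auto simp: space_restrict_space Int_commute)
  finally show ?thesis .
qed

lemma emeasure_lborel_vimage_translation:
  fixes c :: real
  assumes "X \<in> sets borel"
  shows "emeasure lborel ((\<lambda>s. s + c) -` X) = emeasure lborel X"
proof -
  have "emeasure (distr lborel borel ((+) c)) X = emeasure lborel ((+) c -` X \<inter> space lborel)"
    using assms by (intro emeasure_distr) auto
  moreover have "(\<lambda>s. s + c) -` X = (+) c -` X"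
    by (auto simp: add.commute)
  ultimately show ?thesis
    using lborel_distr_plus[of c] by simp
qed

lemma emeasure_lborel_unit_interval_periodic_shift:
  fixes B :: "real set"
  assumes B: "B \<in> sets borel" and periodic: "\<And>u. u + 1 \<in> B \<longleftrightarrow> u \<in> B"
    and a: "0 \<le> a" "a < 1"
  shows "emeasure lborel ({0..<1} \<inter> (\<lambda>s. s + a) -` B) = emeasure lborel ({0..<1} \<inter> B)"
proof -
  \<comment> \<open>Shifting by a maps [0,1-a) onto [a,1) and, by periodicity, [1-a,1) onto [0,a).\<close>
  have "{0..<1} \<inter> (\<lambda>s. s + a) -` B = (\<lambda>s. s + a) -` ({a..<1} \<inter> B) \<union> (\<lambda>s. s + (a - 1)) -` ({0..<a} \<inter> B)"
    using a periodic[of "_ + (a - 1)"] by auto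
  then have "emeasure lborel ({0..<1} \<inter> (\<lambda>s. s + a) -` B)
      = emeasure lborel ((\<lambda>s. s + a) -` ({a..<1} \<inter> B)) + emeasure lborel ((\<lambda>s. s + (a - 1)) -` ({0..<a} \<inter> B))"
    using B by (simp only:) (rule plus_emeasure[symmetric], auto)
  also have "\<dots> = emeasure lborel ({a..<1} \<inter> B) + emeasure lborel ({0..<a} \<inter> B)"
    using B by (simp add: emeasure_lborel_vimage_translation del: vimage_Int)
  also have "\<dots> = emeasure lborel ({a..<1} \<inter> B \<union> {0..<a} \<inter> B)"
    using B by (intro plus_emeasure) auto
  also have "{a..<1} \<inter> B \<union> {0..<a} \<inter> B = {0..<1} \<inter> B"
    using a by auto
  finally show ?thesis .
qed

lemma circle_wrap_unit_interval:
  assumes "z \<in> circle"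
  obtains a where "0 \<le> a" "a < 1" "z = wrap a"
proof
  define a where "a = frac (Arg z / (2 * pi))"
  show "0 \<le> a" "a < 1"
    by (auto simp: a_def frac_lt_1)
  have "norm z = 1"
    using assms by (simp add: circle_def)
  then have "z \<noteq> 0"
    by auto
  with \<open>norm z = 1\<close> have "z = cis (Arg z)"
    using cis_Arg[of z] by (simp add: sgn_div_norm)
  also have "Arg z = 2 * pi * a + 2 * pi * of_int \<lfloor>Arg z / (2 * pi)\<rfloor>"
    by (simp add: a_def frac_def algebra_simps)
  also have "cis \<dots> = wrap a"
    by (simp add: cis_mult[symmetric] cis_multiple_2pi)
  finally show "z = wrap a" .
qed

lemma circle_measure_rotation_invariant:
  assumes t: "t \<in> circle"
  shows "distr circle_measure circle_measure (\<lambda>y. y * t) = circle_measure"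
proof (rule measure_eqI)
  obtain a where a: "0 \<le> a" "a < 1" and t_eq: "t = wrap a"
    using circle_wrap_unit_interval[OF t] by blast
  have rotation: "(\<lambda>y. y * t) \<in> circle_measure \<rightarrow>\<^sub>M circle_measure"
  proof -
    have "(\<lambda>y. y * t) \<in> restrict_space borel circle \<rightarrow>\<^sub>M restrict_space borel circle"
      using t by (intro measurable_restrict_space2 measurable_restrict_space1)
        (auto simp: circle_def norm_mult space_restrict_space)
    then show ?thesis
      by (simp add: measurable_cong_sets[OF sets_circle_measure sets_circle_measure])
  qed
  fix A assume "A \<in> sets (distr circle_measure circle_measure (\<lambda>y. y * t))"
  then have A: "A \<in> sets circle_measure"
    by simp
  then have [measurable]: "A \<in> sets borel"
    by (simp add: sets_circle_measure_iff)
  have "emeasure (distr circle_measure circle_measure (\<lambda>y. y * t)) A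
      = emeasure circle_measure ((\<lambda>y. y * t) -` A \<inter> circle)"
    by (simp add: emeasure_distr[OF rotation A] space_circle_measure)
  also have "\<dots> = emeasure lborel ({0..<1} \<inter> (\<lambda>s. s + a) -` (wrap -` A))"
    using measurable_sets[OF rotation A]
    by (simp add: emeasure_circle_measure space_circle_measure t_eq wrap_add wrap_in_circle vimage_def)
  also have "\<dots> = emeasure lborel ({0..<1} \<inter> wrap -` A)"
    using measurable_sets[OF wrap_borel_measurable \<open>A \<in> sets borel\<close>]
    by (intro emeasure_lborel_unit_interval_periodic_shift[OF _ _ a]) (simp_all add: wrap_add_1)
  also have "\<dots> = emeasure circle_measure A"
    by (rule emeasure_circle_measure[OF A, symmetric])
  finally show "emeasure (distr circle_measure circle_measure (\<lambda>y. y * t)) A = emeasure circle_measure A" .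
qed simp

lemma exp_eq_1_dist:
  fixes z z' :: complex
  assumes "exp z = 1" "exp z' = 1" "z \<noteq> z'"
  shows "2 * pi \<le> norm (z - z')"
proof -
  obtain n :: int where n: "Re z = 0" "Im z = of_int (2 * n) * pi"
    using assms(1) exp_eq_1 by blast
  obtain m :: int where m: "Re z' = 0" "Im z' = of_int (2 * m) * pi"
    using assms(2) exp_eq_1 by blast
  have "n \<noteq> m"
    using n m assms(3) by (auto simp: complex_eq_iff)
  moreover have "Im (z - z') = 2 * pi * of_int (n - m)"
    using n m by (simp add: algebra_simps)
  ultimately have "2 * pi \<le> \<bar>Im (z - z')\<bar>"
    by (simp add: abs_mult)
  also have "\<dots> \<le> norm (z - z')"
    by (rule abs_Im_le_cmod)
  finally show ?thesis .
qed

lemma continuous_exp_additive_affine: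
  fixes g :: "real \<Rightarrow> complex"
  assumes g_cont: "continuous_on UNIV g" and exp_g: "\<And>s r. exp (g (s + r)) = exp (g s) * exp (g r)"
  shows "g s = g 0 + s *\<^sub>R (g 1 - g 0)"
proof -
  \<comment> \<open>g (s + r) - g s - g r is continuous in s with values in 2 pi i Z, hence constant.\<close>
  have g_add: "g (s + r) = g s + g r - g 0" for s r
  proof -
    define D where "D s = g (s + r) - g s - g r" for s
    have exp_D: "exp (D s) = 1" for s
      by (simp add: D_def exp_diff exp_g)
    have "D constant_on UNIV"
    proof (rule continuous_discrete_range_constant[OF connected_UNIV])
      show "continuous_on UNIV D"
        unfolding D_def
        by (intro continuous_on_diff continuous_on_compose2[OF g_cont] continuous_intros g_cont) auto
      show "\<exists>e>0. \<forall>y. y \<in> UNIV \<and> D y \<noteq> D x \<longrightarrow> e \<le> norm (D y - D x)" for x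
        using exp_eq_1_dist[OF exp_D exp_D] by (intro exI[of _ "2 * pi"]) auto
    qed
    then have "D s = D 0"
      unfolding constant_on_def by auto
    then have "g (s + r) - g s - g r = - g 0"
      by (simp add: D_def)
    then show ?thesis
      by (simp add: algebra_simps)
  qed
  have "continuous_on UNIV (\<lambda>s. g s - g 0)"
    by (intro continuous_on_diff g_cont continuous_on_const)
  moreover have "g (s + r) - g 0 = (g s - g 0) + (g r - g 0)" for s r
    using g_add[of s r] by simp
  ultimately have "g s - g 0 = s *\<^sub>R (g 1 - g 0)"
    using additive_continuous_real_linear[of "\<lambda>s. g s - g 0" s] by simp
  then show ?thesis
    by (simp add: algebra_simps)
qed

lemma continuous_circle_character_real:
  fixes h :: "real \<Rightarrow> complex"
  assumes cont: "continuous_on UNIV h" and mult: "\<And>s r. h (s + r) = h s * h r"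
    and circle_valued: "\<And>s. h s \<in> circle"
  obtains b where "\<And>s. h s = cis (b * s)"
proof -
  obtain g where g_cont: "continuous_on UNIV g" and h_exp: "\<And>s. h s = exp (g s)"
    using continuous_logarithm_on_contractible[OF cont contractible_UNIV, of thesis]
      circle_nonzero[OF circle_valued] by simp
  define \<beta> where "\<beta> = g 1 - g 0"
  have g_affine: "g s = g 0 + s *\<^sub>R \<beta>" for s
    unfolding \<beta>_def using g_cont mult by (intro continuous_exp_additive_affine) (simp_all flip: h_exp)
  have "exp (g 0) = 1"
    using mult[of 0 0] circle_nonzero[OF circle_valued[of 0]] by (simp add: h_exp)
  then have h_eq: "h s = exp (of_real s * \<beta>)" for s
    by (subst h_exp, subst g_affine) (simp add: exp_add scaleR_conv_of_real)
  have "Re \<beta> = 0"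
    using circle_valued[of 1] by (simp add: h_eq circle_iff_norm_eq_1)
  define b where "b = Im \<beta>"
  have "\<beta> = \<i> * of_real b"
    using \<open>Re \<beta> = 0\<close> by (simp add: complex_eq_iff b_def)
  then have "h s = cis (b * s)" for s
    by (simp add: h_eq cis_conv_exp mult_ac)
  with that show ?thesis
    by blast
qed

lemma circle_endomorphism_shift_surj:
  fixes w :: "complex \<Rightarrow> complex"
  assumes cont: "continuous_on circle w" and into: "w ` circle \<subseteq> circle"
    and hom: "\<And>a b. a \<in> circle \<Longrightarrow> b \<in> circle \<Longrightarrow> w (a * b) = w a * w b"
    and not_id: "\<exists>y\<in>circle. w y \<noteq> y" and u: "u \<in> circle"
  shows "\<exists>t\<in>circle. w t = t * u"
proof -
  have cis_circle: "cis s \<in> circle" for s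
    by (simp add: circle_def)
  have cis_Arg_circle: "cis (Arg y) = y" if "y \<in> circle" for y
    using that cis_Arg[of y] circle_nonzero[OF that] by (simp add: sgn_div_norm circle_def)
  define h where "h s = w (cis s) / cis s" for s
  have "continuous_on UNIV h"
    unfolding h_def
    by (intro continuous_on_divide continuous_on_compose2[OF cont] continuous_intros)
      (auto simp: cis_circle)
  moreover have "h (s + r) = h s * h r" for s r
    by (simp add: h_def hom cis_circle flip: cis_mult)
  moreover have "h s \<in> circle" for s
  proof -
    have "w (cis s) \<in> circle"
      using into cis_circle[of s] by blast
    then show ?thesis
      by (simp add: h_def circle_iff_norm_eq_1 norm_divide)
  qed
  ultimately obtain b where h_cis: "\<And>s. h s = cis (b * s)"
    by (rule continuous_circle_character_real) blast
  have w_cis: "w (cis s) = cis s * cis (b * s)" for s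
    using h_cis[of s] by (simp add: h_def field_simps)
  have "b \<noteq> 0"
  proof
    assume "b = 0"
    then have "w y = y" if "y \<in> circle" for y
      using w_cis[of "Arg y"] by (simp add: cis_Arg_circle[OF that])
    with not_id show False
      by blast
  qed
  then have "w (cis (Arg u / b)) = cis (Arg u / b) * u"
    using w_cis cis_Arg_circle[OF u] by simp
  then show ?thesis
    using cis_circle by blast
qed

lemma skew_product_circle:
  assumes "prob_space M" "T \<in> M \<rightarrow>\<^sub>M M" "distr M M T = M"
  shows "skew_product M T circle (*) circle_measure"
proof -
  have "sigma_finite_measure circle_measure"
    using prob_space_circle_measure by (simp add: prob_space_def finite_measure_def)
  moreover have "emeasure circle_measure circle \<noteq> 0"
    using prob_space.emeasure_space_1[OF prob_space_circle_measure] by (simp add: space_circle_measure)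
  moreover have "(\<lambda>p. fst p * snd p) \<in> circle_measure \<Otimes>\<^sub>M circle_measure \<rightarrow>\<^sub>M circle_measure"
  proof -
    have "(\<lambda>x. x) \<in> circle_measure \<rightarrow>\<^sub>M borel"
      by (simp add: measurable_cong_sets[OF sets_circle_measure refl] measurable_restrict_space1)
    then have times: "(\<lambda>p. fst p * snd p) \<in> borel_measurable (circle_measure \<Otimes>\<^sub>M circle_measure)"
      using measurable_compose[OF measurable_fst] measurable_compose[OF measurable_snd]
      by (intro borel_measurable_times) auto
    have "(\<lambda>p. fst p * snd p) \<in> circle_measure \<Otimes>\<^sub>M circle_measure \<rightarrow>\<^sub>M restrict_space borel circle"
      by (rule measurable_restrict_space2[OF _ times])
        (auto simp: space_pair_measure space_circle_measure circle_def norm_mult)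
    then show ?thesis
      by (simp add: measurable_cong_sets[OF refl sets_circle_measure])
  qed
  ultimately show ?thesis
    unfolding skew_product_def using assms circle_measure_rotation_invariant
    by (auto simp: space_circle_measure mult.assoc mult.commute)
qed

lemma aperiodic_circle:
  fixes \<phi> :: "'a \<Rightarrow> complex"
  assumes M: "prob_space M" "T \<in> M \<rightarrow>\<^sub>M M" "distr M M T = M"
    and \<phi>: "\<phi> \<in> M \<rightarrow>\<^sub>M circle_measure" and erg: "ergodic (M \<Otimes>\<^sub>M circle_measure) (skew T (*) \<phi>)"
    and E: "E_set M T circle (*) circle_measure \<phi> \<noteq> {restrict id circle}"
  shows "aperiodic M T (*) circle_measure \<phi>"
proof -
  interpret skew_product M T circle "(*)" circle_measure
    using skew_product_circle[OF M] .
  have "restrict id circle \<in> E_set M T circle (*) circle_measure \<phi>"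
    by (rule restrict_id_in_E_set[OF \<phi>]) (auto simp: circle_def)
  with E obtain w where w: "w \<in> E_set M T circle (*) circle_measure \<phi>" "w \<noteq> restrict id circle"
    by blast
  then have "w \<in> extensional circle" "w ` circle = circle" "continuous_on circle w"
    and hom: "\<And>a b. a \<in> circle \<Longrightarrow> b \<in> circle \<Longrightarrow> w (a * b) = w a * w b"
    unfolding E_set_def by auto
  moreover have "\<exists>y\<in>circle. w y \<noteq> y"
    using w(2) extensionalityI[OF \<open>w \<in> extensional circle\<close>, of "restrict id circle"] by auto
  ultimately have "\<exists>t\<in>circle. w t = t * u" if "u \<in> circle" for u
    using circle_endomorphism_shift_surj[OF _ _ hom _ that] by blast
  then show ?thesis
    by (rule aperiodic_if_E_set_shift_surjective[OF \<phi> erg w(1)])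
qed

theorem proposition2p1:
  fixes M :: "'a::polish_space measure" and T :: "'a \<Rightarrow> 'a"
  assumes "prob_space M"
    and "sets M = sets borel"
    and "T \<in> M \<rightarrow>\<^sub>M M" and "distr M M T = M"
    and "ergodic M T"
  shows "(\<forall>\<phi> :: 'a \<Rightarrow> real.
            \<phi> \<in> borel_measurable M \<and> ergodic (M \<Otimes>\<^sub>M lborel) (skew T (+) \<phi>) \<and>
            E_set M T UNIV (+) lborel \<phi> \<noteq> {id}
            \<longrightarrow> aperiodic M T (+) lborel \<phi>)
       \<and> (\<forall>\<phi> :: 'a \<Rightarrow> complex.
            \<phi> \<in> M \<rightarrow>\<^sub>M circle_measure \<and> (\<forall>x\<in>space M. \<phi> x \<in> circle) \<and>
            ergodic (M \<Otimes>\<^sub>M circle_measure) (skew T (*) \<phi>) \<and>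
            E_set M T circle (*) circle_measure \<phi> \<noteq> {restrict id circle}
            \<longrightarrow> aperiodic M T (*) circle_measure \<phi>)"
  using aperiodic_real[OF assms(1,3,4)] aperiodic_circle[OF assms(1,3,4)] by blast

end
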